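(* Let $N\ge 1$, let $u,v$ be coprime non-zero integers and let $m=\max\{|u|,|v|\}$. Then the number of solutions $(a_1,a_2,b_1,b_2)\in([-N,N]\cap\mathbb{Z})^4$ to $u(b_1-b_2)=v(a_1-a_2)$ is equal to \[ \frac{4N^3}{3m^3}\left(12m^2 - 6m(|u|+|v|)+ 4|uv|\right) + O(N^2), \] where the implied constant is absolute (independent of $u,v,N$). *)

theory Defs
  imports Complex_Main
begin

definition sol_count :: "nat \<Rightarrow> int \<Rightarrow> int \<Rightarrow> nat" where
  "sol_count N u v = card {(a1::int, a2::int, b1::int, b2::int).
      a1 \<in> {- int N..int N} \<and> a2 \<in> {- int N..int N} \<and>
      b1 \<in> {- int N..int N} \<and> b2 \<in> {- int N..int N} \<and>
      u * (b1 - b2) = v * (a1 - a2)}"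

end

theory Submission
  imports Defs
begin

text \<open>
  Since u and v are coprime, the solutions are exactly the quadruples with
  (a1 - a2, b1 - b2) = t (u, v) for an integer t, and the box constraint forces
  |t| \<le> x := 2N/m. A difference d is realised by 2N + 1 - |d| pairs in [-N, N],
  so the count is the lattice sum of (2N + 1 - |u| |t|) (2N + 1 - |v| |t|) over
  |t| \<le> \<lfloor>x\<rfloor>. Evaluating it in closed form (Faulhaber) and comparing with
  the integral of (mx - |u| |s|) (mx - |v| |s|) over [-x, x], which is the main
  term, leaves an error of order (mx)^2 = 4N^2.
\<close>

definition pairs_with_difference :: "nat \<Rightarrow> int \<Rightarrow> (int \<times> int) set" where
  "pairs_with_difference N d =
     {(a1, a2). a1 \<in> {- int N..int N} \<and> a2 \<in> {- int N..int N} \<and> a1 - a2 = d}"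

lemma finite_pairs_with_difference: "finite (pairs_with_difference N d)"
proof (rule finite_subset)
  show "pairs_with_difference N d \<subseteq> {- int N..int N} \<times> {- int N..int N}"
    unfolding pairs_with_difference_def by auto
qed simp

lemma card_pairs_with_difference:
  "card (pairs_with_difference N d) = nat (2 * int N + 1 - \<bar>d\<bar>)"
proof -
  have "pairs_with_difference N d
      = (\<lambda>a. (a + d, a)) ` {max (- int N) (- int N - d)..min (int N) (int N - d)}"
    unfolding pairs_with_difference_def by (auto simp: image_iff)
  moreover have "inj (\<lambda>a::int. (a + d, a))"
    by (auto intro: injI)
  ultimately show ?thesis
    by (auto simp: card_image inj_on_subset max_def min_def abs_if)
qed

lemma coprime_mult_eq_mult_iff:
  fixes u v x y :: "'a::ring_gcd"
  assumes "coprime u v" and "u \<noteq> 0"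
  shows "u * y = v * x \<longleftrightarrow> (\<exists>t. x = u * t \<and> y = v * t)"
proof
  assume eq: "u * y = v * x"
  then have "u dvd x"
    using assms(1) by (metis coprime_dvd_mult_right_iff dvd_triv_left)
  then obtain t where "x = u * t" ..
  moreover from eq this have "y = v * t"
    using assms(2) by (simp add: mult.left_commute)
  ultimately show "\<exists>t. x = u * t \<and> y = v * t" by blast
qed (auto simp: mult.left_commute)

lemma abs_le_floor_divide_max_iff:
  fixes B t u v :: int
  assumes "u \<noteq> 0"
  shows "\<bar>t\<bar> \<le> \<lfloor>real_of_int B / real_of_int (max \<bar>u\<bar> \<bar>v\<bar>)\<rfloor> \<longleftrightarrow> \<bar>u * t\<bar> \<le> B \<and> \<bar>v * t\<bar> \<le> B"
proof -
  have "\<bar>t\<bar> \<le> \<lfloor>real_of_int B / real_of_int (max \<bar>u\<bar> \<bar>v\<bar>)\<rfloor>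
      \<longleftrightarrow> real_of_int (max \<bar>u\<bar> \<bar>v\<bar> * \<bar>t\<bar>) \<le> real_of_int B"
    using assms by (simp add: le_floor_iff pos_le_divide_eq mult.commute)
  also have "\<dots> \<longleftrightarrow> max \<bar>u\<bar> \<bar>v\<bar> * \<bar>t\<bar> \<le> B"
    by (rule of_int_le_iff)
  also have "\<dots> \<longleftrightarrow> \<bar>u * t\<bar> \<le> B \<and> \<bar>v * t\<bar> \<le> B"
    by (simp add: max_mult_distrib_right abs_mult)
  finally show ?thesis .
qed

lemma sol_count_eq_card_Sigma:
  fixes N :: nat and u v :: int
  assumes u: "u \<noteq> 0" and coprime: "coprime u v"
  defines "T \<equiv> \<lfloor>real_of_int (2 * int N) / real_of_int (max \<bar>u\<bar> \<bar>v\<bar>)\<rfloor>"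
  shows "sol_count N u v
    = card (SIGMA t:{-T..T}. pairs_with_difference N (u * t) \<times> pairs_with_difference N (v * t))"
    (is "_ = card ?S")
proof -
  let ?flatten = "\<lambda>(t::int, (a1::int, a2::int), (b1::int, b2::int)). (a1, a2, b1, b2)"
  have "sol_count N u v = card (?flatten ` ?S)"
    unfolding sol_count_def
  proof (intro arg_cong[where f = card] equalityI subsetI)
    fix s assume "s \<in> {(a1, a2, b1, b2). a1 \<in> {- int N..int N} \<and> a2 \<in> {- int N..int N} \<and>
      b1 \<in> {- int N..int N} \<and> b2 \<in> {- int N..int N} \<and> u * (b1 - b2) = v * (a1 - a2)}"
    then obtain a1 a2 b1 b2 t where s: "s = (a1, a2, b1, b2)"
      and range: "a1 \<in> {- int N..int N}" "a2 \<in> {- int N..int N}"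
                 "b1 \<in> {- int N..int N}" "b2 \<in> {- int N..int N}"
      and diff: "a1 - a2 = u * t" "b1 - b2 = v * t"
      using coprime_mult_eq_mult_iff[OF coprime u] by blast
    have "\<bar>t\<bar> \<le> T"
      unfolding T_def abs_le_floor_divide_max_iff[OF u]
      using range by (auto simp flip: diff simp: abs_le_iff)
    then show "s \<in> ?flatten ` ?S"
      using range diff unfolding s pairs_with_difference_def
      by (intro rev_image_eqI[of "(t, (a1, a2), (b1, b2))"]) auto
  qed (auto simp: pairs_with_difference_def)
  also have "\<dots> = card ?S"
    by (rule card_image) (auto simp: inj_on_def pairs_with_difference_def u)
  finally show ?thesis .
qed

lemma sol_count_eq_sum:
  fixes N :: nat and u v :: int
  assumes u: "u \<noteq> 0" and coprime: "coprime u v"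
  defines "T \<equiv> \<lfloor>real_of_int (2 * int N) / real_of_int (max \<bar>u\<bar> \<bar>v\<bar>)\<rfloor>"
  shows "int (sol_count N u v)
    = (\<Sum>t\<in>{-T..T}. (2 * int N + 1 - \<bar>u * t\<bar>) * (2 * int N + 1 - \<bar>v * t\<bar>))"
proof -
  let ?D = "pairs_with_difference N"
  have "int (sol_count N u v) = (\<Sum>t\<in>{-T..T}. int (card (?D (u * t))) * int (card (?D (v * t))))"
    unfolding sol_count_eq_card_Sigma[OF u coprime] T_def
    by (simp add: card_SigmaI finite_pairs_with_difference card_cartesian_product)
  also have "\<dots> = (\<Sum>t\<in>{-T..T}. (2 * int N + 1 - \<bar>u * t\<bar>) * (2 * int N + 1 - \<bar>v * t\<bar>))"
  proof (rule sum.cong[OF refl])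
    fix t assume "t \<in> {-T..T}"
    then have "\<bar>t\<bar> \<le> T"
      by auto
    then have "\<bar>u * t\<bar> \<le> 2 * int N" "\<bar>v * t\<bar> \<le> 2 * int N"
      unfolding T_def abs_le_floor_divide_max_iff[OF u] by auto
    then show "int (card (?D (u * t))) * int (card (?D (v * t)))
        = (2 * int N + 1 - \<bar>u * t\<bar>) * (2 * int N + 1 - \<bar>v * t\<bar>)"
      by (simp add: card_pairs_with_difference)
  qed
  finally show ?thesis .
qed

lemma sum_symmetric_interval_product:
  fixes L p q :: "'a::linordered_field"
  shows "(\<Sum>t\<in>{- int n..int n}. (L - p * \<bar>of_int t\<bar>) * (L - q * \<bar>of_int t\<bar>))
    = (2 * of_nat n + 1) * L\<^sup>2 - L * (p + q) * of_nat n * (of_nat n + 1)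
      + p * q * of_nat n * (of_nat n + 1) * (2 * of_nat n + 1) / 3"
proof (induction n)
  case (Suc n)
  let ?f = "\<lambda>t::int. (L - p * \<bar>of_int t\<bar>) * (L - q * \<bar>of_int t\<bar>)"
  have "{- int (Suc n)..int (Suc n)} = insert (- int (Suc n)) (insert (int (Suc n)) {- int n..int n})"
    by auto
  then have "sum ?f {- int (Suc n)..int (Suc n)}
      = 2 * ((L - p * (of_nat n + 1)) * (L - q * (of_nat n + 1))) + sum ?f {- int n..int n}"
    by (simp add: abs_if add.commute)
  then show ?case
    using Suc.IH by (simp add: field_simps power2_eq_square)
qed (simp add: power2_eq_square)

lemma abs_pronic_minus_square_le:
  fixes x :: real
  assumes "real n \<le> x" "x < real n + 1"
  shows "\<bar>real n * (real n + 1) - x\<^sup>2\<bar> \<le> x"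
proof -
  have "real n * (real n + 1) \<le> x * (x + 1)" using assms by (intro mult_mono) auto
  moreover have "x * (x - 1) \<le> x * real n" using assms by (intro mult_left_mono) auto
  moreover have "real n * x \<le> real n * (real n + 1)" using assms by (intro mult_left_mono) auto
  ultimately show ?thesis by (simp add: algebra_simps power2_eq_square)
qed

lemma abs_sum_of_squares_minus_cube_le:
  fixes x :: real
  assumes "real n \<le> x" "x < real n + 1"
  shows "\<bar>real n * (real n + 1) * (2 * real n + 1) / 6 - x ^ 3 / 3\<bar> \<le> x\<^sup>2"
proof -
  have cube: "real n ^ 3 \<le> x ^ 3" and square: "real n ^ 2 \<le> x\<^sup>2"
    using assms by (auto intro: power_mono)
  have "real n \<le> real n ^ 2"
    by (cases n) (auto simp: power2_eq_square)
  with cube square have upper: "real n * (real n + 1) * (2 * real n + 1) / 6 - x ^ 3 / 3 \<le> x\<^sup>2"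
    by (simp add: algebra_simps power2_eq_square power3_eq_cube)
  have "x * real n \<le> x\<^sup>2"
    using assms by (auto simp: power2_eq_square intro: mult_mono)
  have "x ^ 3 - real n ^ 3 = (x - real n) * (x\<^sup>2 + x * real n + real n ^ 2)"
    by (simp add: algebra_simps power2_eq_square power3_eq_cube)
  also have "\<dots> \<le> 1 * (3 * x\<^sup>2)"
    using assms square \<open>x * real n \<le> x\<^sup>2\<close> by (intro mult_mono; (linarith | simp))
  finally have "x ^ 3 - real n ^ 3 \<le> 3 * x\<^sup>2"
    by simp
  moreover have "2 * real n ^ 3 \<le> real n * (real n + 1) * (2 * real n + 1)"
    by (simp add: algebra_simps power2_eq_square power3_eq_cube)
  ultimately have lower: "x ^ 3 / 3 - real n * (real n + 1) * (2 * real n + 1) / 6 \<le> x\<^sup>2"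
    by linarith
  from upper lower show ?thesis by linarith
qed

lemma abs_Suc_square_mult_odd_minus_le:
  fixes M x :: real
  assumes "1 \<le> M" "x \<le> M" "real n \<le> x" "x < real n + 1"
  shows "\<bar>(M + 1)\<^sup>2 * (2 * real n + 1) - 2 * M\<^sup>2 * x\<bar> \<le> 12 * M\<^sup>2"
proof -
  have eq: "(M + 1)\<^sup>2 * (2 * real n + 1) - 2 * M\<^sup>2 * x
      = 2 * M\<^sup>2 * (real n - x) + M\<^sup>2 + (2 * M + 1) * (2 * real n + 1)"
    by (simp add: algebra_simps power2_eq_square)
  have "\<bar>real n - x\<bar> \<le> 1"
    using assms by auto
  then have "\<bar>2 * M\<^sup>2 * (real n - x)\<bar> \<le> 2 * M\<^sup>2"
    by (simp add: abs_mult mult_left_le)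
  moreover have "0 \<le> (2 * M + 1) * (2 * real n + 1)"
    using assms by simp
  moreover have "(2 * M + 1) * (2 * real n + 1) \<le> (3 * M) * (3 * M)"
    using assms by (intro mult_mono) auto
  ultimately show ?thesis
    unfolding eq using zero_le_power2[of M] by (simp add: abs_le_iff power2_eq_square)
qed

lemma abs_Suc_mult_pronic_minus_le:
  fixes M x :: real
  assumes "1 \<le> M" "x \<le> M" "real n \<le> x" "x < real n + 1"
  shows "\<bar>(M + 1) * (real n * (real n + 1)) - M * x\<^sup>2\<bar> \<le> 3 * (M * x)"
proof -
  have eq: "(M + 1) * (real n * (real n + 1)) - M * x\<^sup>2
      = M * (real n * (real n + 1) - x\<^sup>2) + real n * (real n + 1)"
    by (simp add: algebra_simps)
  have "real n * (real n + 1) \<le> x * (2 * M)"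
    using assms by (intro mult_mono) auto
  then have "real n * (real n + 1) \<le> 2 * (M * x)"
    by (simp add: ac_simps)
  moreover have "\<bar>M * (real n * (real n + 1) - x\<^sup>2)\<bar> \<le> M * x"
    using assms abs_pronic_minus_square_le[of n x] by (simp add: abs_mult mult_left_mono)
  moreover have "0 \<le> real n * (real n + 1)"
    by simp
  ultimately show ?thesis
    unfolding eq abs_le_iff by linarith
qed

lemma symmetric_product_sum_approx:
  fixes m p q x :: real
  assumes m: "1 \<le> m" and mx: "1 \<le> m * x" and p: "0 \<le> p" "p \<le> m" and q: "0 \<le> q" "q \<le> m"
    and n: "real n \<le> x" "x < real n + 1"
  shows "\<bar>(\<Sum>t\<in>{- int n..int n}. (m * x + 1 - p * \<bar>of_int t\<bar>) * (m * x + 1 - q * \<bar>of_int t\<bar>))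
      - (2 * m\<^sup>2 * x ^ 3 - m * (p + q) * x ^ 3 + 2 * p * q * x ^ 3 / 3)\<bar> \<le> 20 * (m * x)\<^sup>2"
proof -
  define M where "M = m * x"
  have x: "0 \<le> x" "x \<le> M" "1 \<le> M"
    using n m mx by (auto simp: M_def mult_le_cancel_right1)
  define S where "S = real n * (real n + 1) * (2 * real n + 1)"
  have split: "(\<Sum>t\<in>{- int n..int n}. (m * x + 1 - p * \<bar>of_int t\<bar>) * (m * x + 1 - q * \<bar>of_int t\<bar>))
      - (2 * m\<^sup>2 * x ^ 3 - m * (p + q) * x ^ 3 + 2 * p * q * x ^ 3 / 3)
    = ((M + 1)\<^sup>2 * (2 * real n + 1) - 2 * M\<^sup>2 * x)
      - (p + q) * ((M + 1) * (real n * (real n + 1)) - M * x\<^sup>2)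
      + p * q * (S - 2 * x ^ 3) / 3"
    unfolding sum_symmetric_interval_product M_def S_def
    by (simp add: field_simps power2_eq_square power3_eq_cube)
  have constant_part: "\<bar>(M + 1)\<^sup>2 * (2 * real n + 1) - 2 * M\<^sup>2 * x\<bar> \<le> 12 * M\<^sup>2"
    using abs_Suc_square_mult_odd_minus_le x n by blast
  have "\<bar>(p + q) * ((M + 1) * (real n * (real n + 1)) - M * x\<^sup>2)\<bar> \<le> (2 * m) * (3 * (M * x))"
    unfolding abs_mult using p q x n abs_Suc_mult_pronic_minus_le by (intro mult_mono) auto
  then have linear_part: "\<bar>(p + q) * ((M + 1) * (real n * (real n + 1)) - M * x\<^sup>2)\<bar> \<le> 6 * M\<^sup>2"
    by (simp add: M_def power2_eq_square mult_ac)
  have "\<bar>S - 2 * x ^ 3\<bar> \<le> 6 * x\<^sup>2"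
    using abs_sum_of_squares_minus_cube_le[OF n] unfolding S_def by (simp add: abs_le_iff)
  then have "\<bar>p * q * (S - 2 * x ^ 3)\<bar> \<le> (m * m) * (6 * x\<^sup>2)"
    unfolding abs_mult using p q by (intro mult_mono) auto
  then have quadratic_part: "\<bar>p * q * (S - 2 * x ^ 3) / 3\<bar> \<le> 2 * M\<^sup>2"
    by (simp add: M_def power2_eq_square mult_ac)
  from constant_part linear_part quadratic_part show ?thesis
    unfolding split unfolding M_def[symmetric] abs_le_iff by linarith
qed

lemma sol_count_approx:
  fixes N :: nat and u v :: int
  assumes N: "1 \<le> N" and u: "u \<noteq> 0" and coprime: "coprime u v"
  defines "m \<equiv> real_of_int (max \<bar>u\<bar> \<bar>v\<bar>)"
  shows "\<bar>real (sol_count N u v)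
      - 4 * real N ^ 3 / (3 * m ^ 3)
        * (12 * m ^ 2 - 6 * m * real_of_int (\<bar>u\<bar> + \<bar>v\<bar>) + 4 * real_of_int \<bar>u * v\<bar>)\<bar>
    \<le> 80 * real N ^ 2"
proof -
  define x where "x = 2 * real N / m"
  define n where "n = nat \<lfloor>x\<rfloor>"
  have m: "1 \<le> m"
    using u by (auto simp: m_def)
  have mx: "m * x = 2 * real N"
    using m by (simp add: x_def)
  have floor_x: "\<lfloor>x\<rfloor> = int n"
    using m by (simp add: n_def x_def)
  then have n: "real n \<le> x" "x < real n + 1"
    by linarith+
  have uv_le_m: "\<bar>of_int u\<bar> \<le> m" "\<bar>of_int v\<bar> \<le> m"
    unfolding m_def of_int_abs[symmetric] of_int_le_iff by simp_all
  have mx_ge_1: "1 \<le> m * x"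
    using N by (simp add: mx)
  have T: "\<lfloor>real_of_int (2 * int N) / real_of_int (max \<bar>u\<bar> \<bar>v\<bar>)\<rfloor> = int n"
    using floor_x by (simp add: x_def m_def)
  have "real (sol_count N u v) = real_of_int (int (sol_count N u v))"
    by simp
  also have "\<dots> = (\<Sum>t\<in>{- int n..int n}.
      real_of_int ((2 * int N + 1 - \<bar>u * t\<bar>) * (2 * int N + 1 - \<bar>v * t\<bar>)))"
    unfolding sol_count_eq_sum[OF u coprime] T of_int_sum ..
  also have "\<dots> = (\<Sum>t\<in>{- int n..int n}.
      (m * x + 1 - \<bar>of_int u\<bar> * \<bar>of_int t\<bar>) * (m * x + 1 - \<bar>of_int v\<bar> * \<bar>of_int t\<bar>))"
    unfolding mx by (simp add: abs_mult)
  finally have sum: "real (sol_count N u v) = \<dots>" .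
  have main_term: "4 * real N ^ 3 / (3 * m ^ 3) * (12 * m\<^sup>2 - 6 * m * (p + q) + 4 * (p * q))
      = 2 * m\<^sup>2 * x ^ 3 - m * (p + q) * x ^ 3 + 2 * p * q * x ^ 3 / 3" for p q
    using m by (simp add: x_def field_simps power2_eq_square power3_eq_cube)
  have "\<bar>(\<Sum>t\<in>{- int n..int n}.
        (m * x + 1 - \<bar>of_int u\<bar> * \<bar>of_int t\<bar>) * (m * x + 1 - \<bar>of_int v\<bar> * \<bar>of_int t\<bar>))
      - (2 * m\<^sup>2 * x ^ 3 - m * (\<bar>of_int u\<bar> + \<bar>of_int v\<bar>) * x ^ 3
         + 2 * \<bar>of_int u\<bar> * \<bar>of_int v\<bar> * x ^ 3 / 3)\<bar>
    \<le> 20 * (m * x)\<^sup>2"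
    using m mx_ge_1 n uv_le_m by (intro symmetric_product_sum_approx) auto
  then show ?thesis
    unfolding sum main_term[symmetric] mx by (simp add: abs_mult power2_eq_square)
qed

theorem lemma2p2:
  shows "\<exists>C::real. \<forall>(N::nat) (u::int) (v::int).
    N \<ge> 1 \<longrightarrow> u \<noteq> 0 \<longrightarrow> v \<noteq> 0 \<longrightarrow> coprime u v \<longrightarrow>
    (let m = real_of_int (max \<bar>u\<bar> \<bar>v\<bar>) in
      \<bar>real (sol_count N u v)
        - 4 * real N ^ 3 / (3 * m ^ 3)
          * (12 * m ^ 2 - 6 * m * real_of_int (\<bar>u\<bar> + \<bar>v\<bar>) + 4 * real_of_int \<bar>u * v\<bar>)\<bar>
      \<le> C * real N ^ 2)"
  unfolding Let_def by (intro exI[of _ 80] allI impI sol_count_approx)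

end
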